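(* Let $G=(V,E)$ be a finite connected graph, $G'=(V',E')$ a connected subgraph, $F\subset E$, $q\ge1$, $\kappa\in\{1,q\}^E$ and $f\in E'\setminus F$. Then $$\frac{\det\Delta^{G'}_{\kappa_f^+}}{\det\Delta^{G'}_{\kappa_f^-}}\ \ge\ \frac{\det\Delta^{G}_{\kappa_f^+}}{\det\Delta^{G}_{\kappa_f^-}}\ \ge\ \frac{\det\Delta^{G/F}_{\kappa_f^+}}{\det\Delta^{G/F}_{\kappa_f^-}}.$$
   Context: For a finite connected (multi)graph $H$ with conductances $c$ on its edges, $\Delta^H_cf(x)=\sum_{e=\{x,y\}}c_e(f(x)-f(y))$ (sum over edges incident to $x$; loops contribute nothing) acting on $\{f:\mathbf V(H)\to\mathbb R:\sum_xf(x)=0\}$, and $\det\Delta^H_c$ is its determinant. $\Delta^{G'}_\kappa$ uses the restriction of $\kappa$ to $E'$. $G/F$ is the multigraph obtained by identifying the two endpoints of every $f'\in F$ (its edges are identified with $E\setminus F$, possibly including loops), with conductances $\kappa$ restricted to $E\setminus F$. $\kappa^+_f$ ($\kappa^-_f$) is the configuration equal to $\kappa$ except that its value at $f$ is $q$ (resp. $1$). *)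

theory Defs
  imports Complex_Main "HOL-Combinatorics.Permutations"
begin

text \<open>Finite multigraphs: vertex set V, edge set E, endpoint map ends
  (an edge e joins fst (ends e) and snd (ends e); loops allowed).\<close>

definition edge_rel :: "'e set \<Rightarrow> ('e \<Rightarrow> 'v \<times> 'v) \<Rightarrow> ('v \<times> 'v) set" where
  "edge_rel E ends = {ends e | e. e \<in> E} \<union> {prod.swap (ends e) | e. e \<in> E}"

definition finite_mgraph :: "'v set \<Rightarrow> 'e set \<Rightarrow> ('e \<Rightarrow> 'v \<times> 'v) \<Rightarrow> bool" where
  "finite_mgraph V E ends \<longleftrightarrow> finite V \<and> finite E \<and>
     (\<forall>e\<in>E. fst (ends e) \<in> V \<and> snd (ends e) \<in> V)"

definition connected_mgraph :: "'v set \<Rightarrow> 'e set \<Rightarrow> ('e \<Rightarrow> 'v \<times> 'v) \<Rightarrow> bool" where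
  "connected_mgraph V E ends \<longleftrightarrow> finite_mgraph V E ends \<and> V \<noteq> {} \<and>
     (\<forall>x\<in>V. \<forall>y\<in>V. (x, y) \<in> (edge_rel E ends)\<^sup>*)"

definition lap :: "'e set \<Rightarrow> ('e \<Rightarrow> 'v \<times> 'v) \<Rightarrow> ('e \<Rightarrow> real) \<Rightarrow> ('v \<Rightarrow> real) \<Rightarrow> 'v \<Rightarrow> real" where
  "lap E ends c h x = (\<Sum>e\<in>E.
      (if fst (ends e) = x then c e * (h x - h (snd (ends e))) else 0)
    + (if snd (ends e) = x then c e * (h x - h (fst (ends e))) else 0))"

definition det_on :: "'i set \<Rightarrow> ('i \<Rightarrow> 'i \<Rightarrow> real) \<Rightarrow> real" where
  "det_on I M = (\<Sum>p\<in>{p. p permutes I}. of_int (sign p) * (\<Prod>i\<in>I. M i (p i)))"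

text \<open>Determinant of the Laplacian acting on {h : V \<rightarrow> R. sum h = 0}, computed as the
  determinant of its matrix in the basis (delta_x - delta_x0), x \<in> V - {x0}:
  a zero-sum h has coordinates h(y), y \<noteq> x0, so the matrix entry (y,x) is
  (Delta (delta_x - delta_x0))(y).\<close>
definition det_lap :: "'v set \<Rightarrow> 'e set \<Rightarrow> ('e \<Rightarrow> 'v \<times> 'v) \<Rightarrow> ('e \<Rightarrow> real) \<Rightarrow> real" where
  "det_lap V E ends c =
    (let x0 = (SOME x. x \<in> V)
     in det_on (V - {x0})
          (\<lambda>y x. lap E ends c (\<lambda>z. (if z = x then 1 else 0) - (if z = x0 then 1 else 0)) y))"

text \<open>Contraction G/F: vertices are the classes of V under the equivalence generated
  by the edges of F; edges are E - F with endpoints mapped to their classes.\<close>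
definition cls :: "'v set \<Rightarrow> 'e set \<Rightarrow> ('e \<Rightarrow> 'v \<times> 'v) \<Rightarrow> 'v \<Rightarrow> 'v set" where
  "cls V F ends x = {y \<in> V. (x, y) \<in> (edge_rel F ends)\<^sup>*}"

definition contr_ends :: "'v set \<Rightarrow> 'e set \<Rightarrow> ('e \<Rightarrow> 'v \<times> 'v) \<Rightarrow> 'e \<Rightarrow> 'v set \<times> 'v set" where
  "contr_ends V F ends e = (cls V F ends (fst (ends e)), cls V F ends (snd (ends e)))"

end

theory Submission
  imports Defs
begin

text \<open>Let \<open>L\<close> be the weighted Laplacian matrix of a connected graph and \<open>J\<close> the all-ones
  matrix. Then \<open>L + J\<close> is positive definite and \<open>det (L + J) = |V| \<cdot> det \<Delta>\<close>, so no base
  vertex is needed. Setting the conductance of \<open>f = {u, v}\<close> to \<open>t\<close> adds the rank-one term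
  \<open>t w w\<^sup>T\<close> with \<open>w = \<delta>\<^sub>u - \<delta>\<^sub>v\<close>; a unimodular shear turns \<open>w\<close> into a coordinate vector,
  and the Schur complement at that coordinate gives \<open>det \<Delta>\<^sub>t = K (m + t)\<close> with \<open>K > 0\<close>
  independent of \<open>t\<close>, where \<open>m\<close> is the least energy on \<open>G - f\<close> of a potential with
  \<open>g u - g v = 1\<close>, i.e. the effective conductance between \<open>u\<close> and \<open>v\<close> (Dirichlet's principle).
  The ratio in the lemma is therefore \<open>(m + q) / (m + 1)\<close>, which decreases in \<open>m\<close> for
  \<open>q \<ge> 1\<close>. Deleting edges can only decrease \<open>m\<close>, and contracting \<open>F\<close> can only increase it,
  because potentials on \<open>G/F\<close> pull back to potentials on \<open>G\<close> of the same energy; if \<open>f\<close>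
  becomes a loop the ratio is \<open>1\<close>.\<close>

section \<open>Determinants of matrices indexed by a finite set\<close>

lemma det_on_cong:
  assumes "\<And>i j. i \<in> I \<Longrightarrow> j \<in> I \<Longrightarrow> M i j = N i j"
  shows "det_on I M = det_on I N"
  unfolding det_on_def
proof (rule sum.cong[OF refl])
  fix p assume "p \<in> {p. p permutes I}"
  hence p: "p permutes I" by simp
  show "of_int (sign p) * (\<Prod>i\<in>I. M i (p i)) = of_int (sign p) * (\<Prod>i\<in>I. N i (p i))"
    using assms permutes_in_image[OF p] by (auto intro!: prod.cong)
qed

lemma det_on_empty: "det_on {} M = 1"
  unfolding det_on_def by (simp add: permutes_empty)

lemma det_on_transpose:
  assumes fin: "finite I"
  shows "det_on I (\<lambda>i j. M j i) = det_on I M"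
proof -
  have "det_on I (\<lambda>i j. M j i) = (\<Sum>p\<in>{p. p permutes I}. of_int (sign (inv p)) * (\<Prod>i\<in>I. M (inv p i) i))"
    unfolding det_on_def by (subst sum_permutations_inverse) simp
  also have "\<dots> = det_on I M"
    unfolding det_on_def
  proof (rule sum.cong[OF refl])
    fix p assume "p \<in> {p. p permutes I}"
    hence p: "p permutes I" by simp
    have s: "sign (inv p) = sign p"
      by (metis sign_inverse fin p permutation_permutes)
    have "(\<Prod>i\<in>I. M (inv p i) i) = (\<Prod>i\<in>p ` I. M (inv p i) i)"
      using permutes_image[OF p] by simp
    also have "\<dots> = (\<Prod>i\<in>I. M (inv p (p i)) (p i))"
      by (subst prod.reindex) (auto intro: inj_on_subset[OF permutes_inj[OF p]])
    also have "\<dots> = (\<Prod>i\<in>I. M i (p i))"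
      using permutes_inverses[OF p] by simp
    finally show "of_int (sign (inv p)) * (\<Prod>i\<in>I. M (inv p i) i) = of_int (sign p) * (\<Prod>i\<in>I. M i (p i))"
      using s by simp
  qed
  finally show ?thesis .
qed

lemma det_on_replace_col:
  assumes fin: "finite I" and u: "u \<in> I"
  shows "det_on I (\<lambda>i j. if j = u then c i else M i j)
    = (\<Sum>p | p permutes I. of_int (sign p) * c (inv p u) * (\<Prod>i\<in>I - {inv p u}. M i (p i)))"
  unfolding det_on_def
proof (rule sum.cong[OF refl])
  fix p assume "p \<in> {p. p permutes I}"
  hence p: "p permutes I" by simp
  have i0: "inv p u \<in> I" and pi0: "p (inv p u) = u"
    using permutes_in_image[OF permutes_inv[OF p]] u permutes_inverses[OF p] by auto
  have "p i \<noteq> u" if "i \<in> I - {inv p u}" for i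
    using that permutes_inverses[OF p] by (metis DiffD2 singletonI)
  hence "(\<Prod>i\<in>I - {inv p u}. if p i = u then c i else M i (p i)) = (\<Prod>i\<in>I - {inv p u}. M i (p i))"
    by (intro prod.cong) auto
  thus "of_int (sign p) * (\<Prod>i\<in>I. if p i = u then c i else M i (p i))
    = of_int (sign p) * c (inv p u) * (\<Prod>i\<in>I - {inv p u}. M i (p i))"
    using prod.remove[OF fin i0, of "\<lambda>i. if p i = u then c i else M i (p i)"] pi0 by simp
qed

lemma det_on_linear_col:
  assumes fin: "finite I" and u: "u \<in> I"
  shows "det_on I (\<lambda>i j. if j = u then (\<Sum>x\<in>X. a x * C x i) else M i j)
       = (\<Sum>x\<in>X. a x * det_on I (\<lambda>i j. if j = u then C x i else M i j))"
  unfolding det_on_replace_col[OF fin u] sum_distrib_left sum_distrib_right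
  by (subst sum.swap) (simp add: algebra_simps)

lemma det_on_equal_cols:
  assumes fin: "finite I" and jk: "j \<in> I" "k \<in> I" "j \<noteq> k"
    and eq: "\<And>i. i \<in> I \<Longrightarrow> M i j = M i k"
  shows "det_on I M = 0"
proof -
  let ?t = "Transposition.transpose j k"
  let ?f = "\<lambda>p. of_int (sign p) * (\<Prod>i\<in>I. M i (p i))"
  have tp: "?t permutes I" using jk by (simp add: permutes_swap_id)
  have tt: "\<And>a. ?t \<circ> (?t \<circ> a) = a" by (simp add: fun_eq_iff)
  have "det_on I M = sum ?f {p. p permutes I}" unfolding det_on_def ..
  also have "\<dots> = sum (\<lambda>p. ?f (?t \<circ> p)) {p. p permutes I}"
  proof (rule sum.reindex_bij_witness[where i="\<lambda>p. ?t \<circ> p" and j="\<lambda>p. ?t \<circ> p"])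
    fix a assume "a \<in> {p. p permutes I}"
    hence a: "a permutes I" by simp
    show "?t \<circ> (?t \<circ> a) = a" by (rule tt)
    show "?t \<circ> a \<in> {p. p permutes I}" using permutes_compose[OF a tp] by simp
    show "?f (?t \<circ> (?t \<circ> a)) = ?f a" by (simp only: tt)
  next
    fix b assume "b \<in> {p. p permutes I}"
    hence b: "b permutes I" by simp
    show "?t \<circ> (?t \<circ> b) = b" by (rule tt)
    show "?t \<circ> b \<in> {p. p permutes I}" using permutes_compose[OF b tp] by simp
  qed
  also have "\<dots> = sum (\<lambda>p. - ?f p) {p. p permutes I}"
  proof (rule sum.cong[OF refl])
    fix p assume "p \<in> {p. p permutes I}"
    hence p: "p permutes I" by simp
    have "sign (?t \<circ> p) = - sign p"
      using sign_compose[of ?t p] sign_swap_id[of j k] jk fin p tp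
      by (simp add: permutation_permutes) (metis permutation_permutes)
    moreover have "(\<Prod>i\<in>I. M i ((?t \<circ> p) i)) = (\<Prod>i\<in>I. M i (p i))"
    proof (rule prod.cong[OF refl])
      fix i assume i: "i \<in> I"
      show "M i ((?t \<circ> p) i) = M i (p i)"
        using eq[OF i] by (auto simp: Transposition.transpose_def)
    qed
    ultimately show "?f (?t \<circ> p) = - ?f p" by simp
  qed
  also have "\<dots> = - det_on I M" unfolding det_on_def by (simp add: sum_negf)
  finally show ?thesis by simp
qed

lemma det_on_col_combination:
  assumes fin: "finite I" and u: "u \<in> I"
  shows "det_on I (\<lambda>i j. if j = u then (\<Sum>x\<in>I. h x * M i x) else M i j) = h u * det_on I M"
proof -
  have "det_on I (\<lambda>i j. if j = u then (\<Sum>x\<in>I. h x * M i x) else M i j)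
      = (\<Sum>x\<in>I. h x * det_on I (\<lambda>i j. if j = u then M i x else M i j))"
    by (rule det_on_linear_col[OF fin u])
  also have "\<dots> = h u * det_on I (\<lambda>i j. if j = u then M i u else M i j)
      + (\<Sum>x\<in>I - {u}. h x * det_on I (\<lambda>i j. if j = u then M i x else M i j))"
    using sum.remove[OF fin u] by blast
  also have "(\<Sum>x\<in>I - {u}. h x * det_on I (\<lambda>i j. if j = u then M i x else M i j)) = 0"
  proof (rule sum.neutral, rule ballI)
    fix x assume x: "x \<in> I - {u}"
    have "det_on I (\<lambda>i j. if j = u then M i x else M i j) = 0"
      by (rule det_on_equal_cols[OF fin u, of x]) (use x in auto)
    thus "h x * det_on I (\<lambda>i j. if j = u then M i x else M i j) = 0" by simp
  qed
  also have "(\<lambda>i j. if j = u then M i u else M i j) = M" by (auto simp: fun_eq_iff)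
  finally show ?thesis by simp
qed

lemma det_on_expand_col:
  assumes fin: "finite I" and u: "u \<in> I"
    and zero: "\<And>i. i \<in> I \<Longrightarrow> i \<noteq> u \<Longrightarrow> M i u = 0"
  shows "det_on I M = M u u * det_on (I - {u}) M"
proof -
  let ?f = "\<lambda>p. of_int (sign p) * (\<Prod>i\<in>I. M i (p i))"
  have "?f p = 0" if p: "p permutes I" and np: "\<not> p permutes (I - {u})" for p
  proof -
    have "p u \<noteq> u" using permutes_superset[OF p, of "I - {u}"] np by auto
    hence "inv p u \<noteq> u" by (metis permutes_inverses(1)[OF p])
    moreover have "inv p u \<in> I" using permutes_in_image[OF permutes_inv[OF p]] u by simp
    ultimately have "M (inv p u) (p (inv p u)) = 0" using zero permutes_inverses(1)[OF p] by simp
    thus ?thesis using \<open>inv p u \<in> I\<close> fin by (simp add: prod_zero_iff) blast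
  qed
  hence "det_on I M = (\<Sum>p | p permutes (I - {u}). ?f p)"
    unfolding det_on_def using fin
    by (intro sum.mono_neutral_right) (auto intro: permutes_subset simp: finite_permutations)
  also have "\<dots> = M u u * det_on (I - {u}) M"
    unfolding det_on_def sum_distrib_left
  proof (rule sum.cong[OF refl])
    fix p assume "p \<in> {p. p permutes (I - {u})}"
    hence "p u = u" using permutes_not_in by fastforce
    thus "?f p = M u u * (of_int (sign p) * (\<Prod>i\<in>I - {u}. M i (p i)))"
      using prod.remove[OF fin u, of "\<lambda>i. M i (p i)"] by simp
  qed
  finally show ?thesis .
qed

lemma det_on_row_combination:
  assumes fin: "finite I" and u: "u \<in> I"
  shows "det_on I (\<lambda>i j. if i = u then (\<Sum>x\<in>I. h x * M x j) else M i j) = h u * det_on I M"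
proof -
  have "det_on I (\<lambda>i j. if i = u then (\<Sum>x\<in>I. h x * M x j) else M i j)
     = det_on I (\<lambda>i j. if j = u then (\<Sum>x\<in>I. h x * M x i) else M j i)"
    by (subst det_on_transpose[OF fin, symmetric]) simp
  also have "\<dots> = h u * det_on I (\<lambda>i j. M j i)"
    by (rule det_on_col_combination[OF fin u])
  finally show ?thesis using det_on_transpose[OF fin] by simp
qed

lemma det_on_add_col_multiples:
  assumes fin: "finite I" and u: "u \<in> I" and J: "J \<subseteq> I - {u}" and fJ: "finite J"
  shows "det_on I (\<lambda>i j. if j \<in> J then M i j + a j * M i u else M i j) = det_on I M"
  using fJ J
proof (induction J rule: finite_induct)
  case empty thus ?case by simp
next
  case (insert j J)
  let ?MJ = "\<lambda>i j. if j \<in> J then M i j + a j * M i u else M i j"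
  have jI: "j \<in> I" and ju: "j \<noteq> u" and uJ: "u \<notin> J" using insert by auto
  define h where "h x = (if x = j then 1 else 0) + (if x = u then a j else 0)" for x
  have s: "(\<Sum>x\<in>I. h x * ?MJ i x) = M i j + a j * M i u" for i
  proof -
    have "(\<Sum>x\<in>I. h x * ?MJ i x) = (\<Sum>x\<in>I. (if x = j then ?MJ i x else 0) + (if x = u then a j * ?MJ i x else 0))"
      by (rule sum.cong) (use ju in \<open>auto simp: h_def\<close>)
    also have "\<dots> = ?MJ i j + a j * ?MJ i u"
      using fin jI u by (simp add: sum.distrib)
    also have "\<dots> = M i j + a j * M i u" using insert.hyps(2) uJ by simp
    finally show ?thesis .
  qed
  have "det_on I (\<lambda>i k. if k = j then (\<Sum>x\<in>I. h x * ?MJ i x) else ?MJ i k) = h j * det_on I ?MJ"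
    by (rule det_on_col_combination[OF fin jI])
  moreover have "(\<lambda>i k. if k = j then (\<Sum>x\<in>I. h x * ?MJ i x) else ?MJ i k)
      = (\<lambda>i k. if k \<in> insert j J then M i k + a k * M i u else M i k)"
    using s insert.hyps(2) uJ by (auto simp: fun_eq_iff)
  moreover have "h j = 1" using ju by (simp add: h_def)
  ultimately show ?case using insert by simp
qed

lemma det_on_add_row_multiples:
  assumes fin: "finite I" and u: "u \<in> I" and J: "J \<subseteq> I - {u}" "finite J"
  shows "det_on I (\<lambda>i j. if i \<in> J then M i j + a i * M u j else M i j) = det_on I M"
proof -
  have "det_on I (\<lambda>i j. if i \<in> J then M i j + a i * M u j else M i j)
      = det_on I (\<lambda>i j. if j \<in> J then M j i + a j * M u i else M j i)"
    by (subst det_on_transpose[OF fin, symmetric]) simp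
  also have "\<dots> = det_on I (\<lambda>i j. M j i)"
    by (rule det_on_add_col_multiples[OF fin u J])
  finally show ?thesis using det_on_transpose[OF fin] by simp
qed

lemma det_on_expand_row:
  assumes fin: "finite I" and u: "u \<in> I" and "\<And>j. j \<in> I \<Longrightarrow> j \<noteq> u \<Longrightarrow> M u j = 0"
  shows "det_on I M = M u u * det_on (I - {u}) M"
proof -
  have "det_on I (\<lambda>i j. M j i) = M u u * det_on (I - {u}) (\<lambda>i j. M j i)"
    by (rule det_on_expand_col[OF fin u]) (use assms(3) in auto)
  thus ?thesis using det_on_transpose[OF fin, of M] det_on_transpose[of "I - {u}" M] fin by simp
qed


section \<open>Positive definite forms and rank-one updates\<close>

definition quad_form :: "'i set \<Rightarrow> ('i \<Rightarrow> 'i \<Rightarrow> real) \<Rightarrow> ('i \<Rightarrow> real) \<Rightarrow> real" where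
  "quad_form R M h = (\<Sum>y\<in>R. \<Sum>x\<in>R. h y * M y x * h x)"

definition mat_vec :: "'i set \<Rightarrow> ('i \<Rightarrow> 'i \<Rightarrow> real) \<Rightarrow> ('i \<Rightarrow> real) \<Rightarrow> 'i \<Rightarrow> real" where
  "mat_vec R M h y = (\<Sum>x\<in>R. M y x * h x)"

definition pos_def_on :: "'i set \<Rightarrow> ('i \<Rightarrow> 'i \<Rightarrow> real) \<Rightarrow> bool" where
  "pos_def_on R M \<longleftrightarrow> (\<forall>h. (\<exists>x\<in>R. h x \<noteq> 0) \<longrightarrow> quad_form R M h > 0)"

definition symmetric_on :: "'i set \<Rightarrow> ('i \<Rightarrow> 'i \<Rightarrow> real) \<Rightarrow> bool" where
  "symmetric_on R M \<longleftrightarrow> (\<forall>i\<in>R. \<forall>j\<in>R. M i j = M j i)"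

lemma quad_form_mat_vec: "quad_form R M h = (\<Sum>y\<in>R. h y * mat_vec R M h y)"
  unfolding quad_form_def mat_vec_def by (simp add: sum_distrib_left mult.assoc)

lemma quad_form_restrict:
  assumes "finite R" "S \<subseteq> R" "\<And>x. x \<in> R - S \<Longrightarrow> h x = 0"
  shows "quad_form R M h = quad_form S M h"
proof -
  have "quad_form R M h = (\<Sum>y\<in>R. \<Sum>x\<in>S. h y * M y x * h x)"
    unfolding quad_form_def
    by (rule sum.cong[OF refl], rule sum.mono_neutral_right) (use assms in \<open>auto intro: finite_subset\<close>)
  also have "\<dots> = quad_form S M h"
    unfolding quad_form_def
    by (rule sum.mono_neutral_right) (use assms in \<open>auto intro: finite_subset\<close>)
  finally show ?thesis .
qed

lemma quad_form_cong:
  assumes "\<And>x. x \<in> R \<Longrightarrow> h x = g x"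
  shows "quad_form R M h = quad_form R M g"
  unfolding quad_form_def using assms by simp

lemma mat_vec_cong:
  assumes "\<And>x. x \<in> R \<Longrightarrow> h x = g x"
  shows "mat_vec R M h y = mat_vec R M g y"
  unfolding mat_vec_def using assms by simp

lemma pos_def_on_subset:
  assumes fin: "finite R" and S: "S \<subseteq> R" and pd: "pos_def_on R M"
  shows "pos_def_on S M"
  unfolding pos_def_on_def
proof (intro allI impI)
  fix h :: "_ \<Rightarrow> real" assume "\<exists>x\<in>S. h x \<noteq> 0"
  then obtain x where x: "x \<in> S" "h x \<noteq> 0" by blast
  let ?h = "\<lambda>x. if x \<in> S then h x else (0::real)"
  have ex: "\<exists>x\<in>R. ?h x \<noteq> 0" using x S by auto
  have "quad_form R M ?h > 0" using pd[unfolded pos_def_on_def, rule_format, OF ex] .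
  also have "quad_form R M ?h = quad_form S M ?h" by (rule quad_form_restrict[OF fin S]) simp
  also have "\<dots> = quad_form S M h" by (rule quad_form_cong) simp
  finally show "quad_form S M h > 0" .
qed

lemma symmetric_on_subset: "symmetric_on R M \<Longrightarrow> S \<subseteq> R \<Longrightarrow> symmetric_on S M"
  unfolding symmetric_on_def by blast

lemma quad_form_nonneg:
  assumes "pos_def_on R M" shows "quad_form R M h \<ge> 0"
proof (cases "\<exists>x\<in>R. h x \<noteq> 0")
  case True thus ?thesis using assms unfolding pos_def_on_def by (simp add: less_imp_le)
next
  case False thus ?thesis unfolding quad_form_def by simp
qed

lemma quad_form_add:
  assumes sym: "symmetric_on R M"
  shows "quad_form R M (\<lambda>x. h x + d x) = quad_form R M h + 2 * (\<Sum>y\<in>R. d y * mat_vec R M h y) + quad_form R M d"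
proof -
  have c: "(\<Sum>y\<in>R. \<Sum>x\<in>R. h y * M y x * d x) = (\<Sum>y\<in>R. d y * mat_vec R M h y)"
  proof -
    have "(\<Sum>y\<in>R. \<Sum>x\<in>R. h y * M y x * d x) = (\<Sum>x\<in>R. \<Sum>y\<in>R. h y * M y x * d x)"
      by (rule sum.swap)
    also have "\<dots> = (\<Sum>x\<in>R. d x * mat_vec R M h x)"
      unfolding mat_vec_def sum_distrib_left
      by (rule sum.cong[OF refl], rule sum.cong[OF refl]) (use sym in \<open>auto simp: symmetric_on_def\<close>)
    finally show ?thesis .
  qed
  have c2: "(\<Sum>y\<in>R. \<Sum>x\<in>R. d y * M y x * h x) = (\<Sum>y\<in>R. d y * mat_vec R M h y)"
    unfolding mat_vec_def sum_distrib_left by (simp add: mult.assoc)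
  have "quad_form R M (\<lambda>x. h x + d x) = (\<Sum>y\<in>R. \<Sum>x\<in>R. h y * M y x * h x + h y * M y x * d x + d y * M y x * h x + d y * M y x * d x)"
    unfolding quad_form_def by (simp add: algebra_simps)
  also have "\<dots> = quad_form R M h + (\<Sum>y\<in>R. \<Sum>x\<in>R. h y * M y x * d x) + (\<Sum>y\<in>R. \<Sum>x\<in>R. d y * M y x * h x) + quad_form R M d"
    unfolding quad_form_def by (simp add: sum.distrib)
  finally show ?thesis using c c2 by simp
qed

lemma mat_vec_add_scaled: "mat_vec R M (\<lambda>x. g x + a * h x) y = mat_vec R M g y + a * mat_vec R M h y"
  unfolding mat_vec_def by (simp add: sum.distrib sum_distrib_left algebra_simps)

lemma pos_def_on_solvable:
  assumes "finite R" "pos_def_on R M" "symmetric_on R M"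
  shows "\<exists>h. \<forall>y\<in>R. mat_vec R M h y = b y"
  using assms
proof (induction R arbitrary: b rule: finite_induct)
  case empty thus ?case by simp
next
  case (insert u S)
  let ?R = "insert u S"
  have pdS: "pos_def_on S M" by (rule pos_def_on_subset[OF _ _ insert.prems(1)]) (use insert in auto)
  have symS: "symmetric_on S M" by (rule symmetric_on_subset[OF insert.prems(2)]) auto
  obtain z where z: "\<forall>y\<in>S. mat_vec S M z y = - M y u" using insert.IH[OF pdS symS, of "\<lambda>y. - M y u"] by blast
  \<comment> \<open>\<open>hs\<close> satisfies the homogeneous equations on \<open>S\<close>; adding a multiple fixes the one at \<open>u\<close>\<close>
  define hs where "hs = z(u := 1)"
  have mvR: "mat_vec ?R M g y = M y u * g u + mat_vec S M g y" for g y
    unfolding mat_vec_def using insert by simp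
  have hsz: "mat_vec S M hs y = mat_vec S M z y" for y
    by (rule mat_vec_cong) (use insert in \<open>auto simp: hs_def\<close>)
  have hs0: "\<forall>y\<in>S. mat_vec ?R M hs y = 0"
    using z by (simp add: mvR hsz) (simp add: hs_def)
  have qfhs: "quad_form ?R M hs = mat_vec ?R M hs u"
    unfolding quad_form_mat_vec using insert hs0 by (simp add: hs_def)
  have spos: "quad_form ?R M hs > 0" using insert.prems(1) unfolding pos_def_on_def by (force simp: hs_def)
  obtain y0 where y0: "\<forall>y\<in>S. mat_vec S M y0 y = b y" using insert.IH[OF pdS symS, of b] by blast
  define g where "g = y0(u := 0)"
  have gS: "mat_vec S M g y = mat_vec S M y0 y" for y
    by (rule mat_vec_cong) (use insert in \<open>auto simp: g_def\<close>)
  define \<alpha> where "\<alpha> = (b u - mat_vec ?R M g u) / quad_form ?R M hs"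
  show ?case
  proof (intro exI ballI)
    fix y assume y: "y \<in> ?R"
    show "mat_vec ?R M (\<lambda>x. g x + \<alpha> * hs x) y = b y"
    proof (cases "y = u")
      case True
      have "mat_vec ?R M (\<lambda>x. g x + \<alpha> * hs x) u = mat_vec ?R M g u + \<alpha> * mat_vec ?R M hs u" by (rule mat_vec_add_scaled)
      thus ?thesis using True spos qfhs by (simp add: \<alpha>_def)
    next
      case False hence yS: "y \<in> S" using y by simp
      thus ?thesis using hs0 y0 by (simp add: mat_vec_add_scaled mvR gS) (simp add: g_def)
    qed
  qed
qed

lemma quad_form_pivot:
  assumes fin: "finite R" and u: "u \<in> R" and hu: "h u = 1"
    and zero: "\<And>y. y \<in> R - {u} \<Longrightarrow> mat_vec R M h y = 0"
  shows "quad_form R M h = mat_vec R M h u"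
  unfolding quad_form_mat_vec using sum.remove[OF fin u, of "\<lambda>y. h y * mat_vec R M h y"] zero hu by simp

lemma det_on_pivot:
  assumes fin: "finite R" and u: "u \<in> R" and hu: "h u = 1"
    and zero: "\<And>y. y \<in> R - {u} \<Longrightarrow> mat_vec R M h y = 0"
  shows "det_on R M = quad_form R M h * det_on (R - {u}) M"
proof -
  let ?M' = "\<lambda>i j. if j = u then (\<Sum>x\<in>R. h x * M i x) else M i j"
  have col: "(\<Sum>x\<in>R. h x * M i x) = mat_vec R M h i" for i
    unfolding mat_vec_def by (simp add: mult.commute)
  have "det_on R M = det_on R ?M'"
    using det_on_col_combination[OF fin u, of h M] hu by simp
  also have "\<dots> = ?M' u u * det_on (R - {u}) ?M'"
    by (rule det_on_expand_col[OF fin u]) (use zero col in auto)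
  also have "det_on (R - {u}) ?M' = det_on (R - {u}) M" by (rule det_on_cong) auto
  finally show ?thesis using col quad_form_pivot[OF assms] by simp
qed

lemma quad_form_pivot_min:
  assumes fin: "finite R" and u: "u \<in> R" and sym: "symmetric_on R M" and pd: "pos_def_on R M"
    and hu: "h u = 1" and zero: "\<And>y. y \<in> R - {u} \<Longrightarrow> mat_vec R M h y = 0" and gu: "g u = 1"
  shows "quad_form R M h \<le> quad_form R M g"
proof -
  define d where "d x = g x - h x" for x
  have "(\<Sum>y\<in>R. d y * mat_vec R M h y) = 0"
    using sum.remove[OF fin u, of "\<lambda>y. d y * mat_vec R M h y"] zero hu gu by (simp add: d_def)
  hence "quad_form R M (\<lambda>x. h x + d x) = quad_form R M h + quad_form R M d"
    by (simp add: quad_form_add[OF sym])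
  moreover have "quad_form R M (\<lambda>x. h x + d x) = quad_form R M g" by (simp add: d_def)
  ultimately show ?thesis using quad_form_nonneg[OF pd, of d] by simp
qed

lemma det_on_schur_min:
  assumes fin: "finite R" and pd: "pos_def_on R M" and sym: "symmetric_on R M" and u: "u \<in> R"
  obtains h where "h u = 1" "det_on R M = quad_form R M h * det_on (R - {u}) M"
    "\<And>g. g u = 1 \<Longrightarrow> quad_form R M h \<le> quad_form R M g"
proof -
  let ?S = "R - {u}"
  have "pos_def_on ?S M" by (rule pos_def_on_subset[OF fin _ pd]) auto
  moreover have "symmetric_on ?S M" by (rule symmetric_on_subset[OF sym]) auto
  ultimately obtain z where z: "\<forall>y\<in>?S. mat_vec ?S M z y = - M y u"
    using pos_def_on_solvable[of ?S M "\<lambda>y. - M y u"] fin by auto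
  define h where "h = z(u := 1)"
  have hu: "h u = 1" by (simp add: h_def)
  have "mat_vec R M h y = M y u + mat_vec ?S M z y" for y
    unfolding mat_vec_def using sum.remove[OF fin u, of "\<lambda>x. M y x * h x"]
    by (simp add: h_def)
  hence zero: "mat_vec R M h y = 0" if "y \<in> ?S" for y using z that by simp
  show ?thesis
    using that[OF hu det_on_pivot[OF fin u hu zero] quad_form_pivot_min[OF fin u sym pd hu zero]] .
qed

lemma det_on_pos_if_pos_def:
  assumes "finite R" "pos_def_on R M" "symmetric_on R M"
  shows "det_on R M > 0"
  using assms
proof (induction R rule: finite_induct)
  case empty thus ?case by (simp add: det_on_empty)
next
  case (insert u S)
  have pdS: "pos_def_on S M" by (rule pos_def_on_subset[OF _ _ insert.prems(1)]) (use insert in auto)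
  have symS: "symmetric_on S M" by (rule symmetric_on_subset[OF insert.prems(2)]) auto
  obtain h where h: "h u = 1" "det_on (insert u S) M = quad_form (insert u S) M h * det_on (insert u S - {u}) M"
    using det_on_schur_min[OF _ insert.prems, of u] insert by auto
  have "quad_form (insert u S) M h > 0" using insert.prems(1) h(1) unfolding pos_def_on_def by force
  moreover have "insert u S - {u} = S" using insert by auto
  ultimately show ?case using h(2) insert.IH[OF pdS symS] by simp
qed

lemma quad_form_diag_update:
  assumes fin: "finite R" and p: "p \<in> R"
  shows "quad_form R (\<lambda>i j. M i j + (if i = p \<and> j = p then t else 0)) h = quad_form R M h + t * (h p)\<^sup>2"
proof -
  have "quad_form R (\<lambda>i j. M i j + (if i = p \<and> j = p then t else 0)) h
      = (\<Sum>i\<in>R. \<Sum>j\<in>R. h i * M i j * h j + (if i = p then (if j = p then h i * t * h j else 0) else 0))"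
    unfolding quad_form_def by (intro sum.cong) (auto simp: algebra_simps)
  also have "\<dots> = quad_form R M h + (\<Sum>i\<in>R. if i = p then (\<Sum>j\<in>R. if j = p then h i * t * h j else 0) else 0)"
    unfolding quad_form_def by (simp add: sum.distrib) (rule sum.cong; simp)
  also have "\<dots> = quad_form R M h + t * (h p)\<^sup>2"
    using fin p by (simp add: power2_eq_square algebra_simps)
  finally show ?thesis .
qed

lemma det_on_diag_update:
  fixes M :: "'i \<Rightarrow> 'i \<Rightarrow> real" and p :: 'i
  defines "M' t \<equiv> \<lambda>i j. M i j + (if i = p \<and> j = p then t else 0)"
  assumes fin: "finite R" and p: "p \<in> R" and sym: "symmetric_on R M"
    and pd: "\<And>t. t > 0 \<Longrightarrow> pos_def_on R (M' t)"
  obtains K h where "K > 0" "h p = 1" "\<And>g. g p = 1 \<Longrightarrow> quad_form R M h \<le> quad_form R M g"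
    "\<And>t. t > 0 \<Longrightarrow> det_on R (M' t) = K * (quad_form R M h + t)"
proof -
  have sym': "symmetric_on R (M' t)" for t
    using sym unfolding symmetric_on_def M'_def by auto
  have qf': "quad_form R (M' t) g = quad_form R M g + t" if "g p = 1" for g t
    using quad_form_diag_update[OF fin p] that unfolding M'_def by simp
  obtain h where h: "h p = 1" "\<And>g. g p = 1 \<Longrightarrow> quad_form R (M' 1) h \<le> quad_form R (M' 1) g"
    using det_on_schur_min[OF fin pd sym' p, of 1] by auto
  have min: "quad_form R M h \<le> quad_form R M g" if "g p = 1" for g
    using h(2)[of g, OF that] qf'[of g, OF that] qf'[of h, OF h(1)] by simp
  \<comment> \<open>the minor at \<open>p\<close> does not see the update\<close>
  define K where "K = det_on (R - {p}) (M' 1)"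
  have K: "det_on (R - {p}) (M' t) = K" for t
    unfolding K_def M'_def by (rule det_on_cong) auto
  have "K > 0"
    unfolding K_def using fin pos_def_on_subset[OF fin _ pd] symmetric_on_subset[OF sym']
    by (intro det_on_pos_if_pos_def) auto
  moreover have "det_on R (M' t) = K * (quad_form R M h + t)" if t: "t > 0" for t
  proof -
    obtain ht where ht: "ht p = 1" "det_on R (M' t) = quad_form R (M' t) ht * det_on (R - {p}) (M' t)"
      "\<And>g. g p = 1 \<Longrightarrow> quad_form R (M' t) ht \<le> quad_form R (M' t) g"
      using det_on_schur_min[OF fin pd[OF t] sym' p] by auto
    have "quad_form R M ht = quad_form R M h"
      using ht(3)[of h, OF h(1)] qf'[of h, OF h(1)] qf'[of ht, OF ht(1)] min[of ht, OF ht(1)] by simp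
    thus ?thesis using ht(2) qf'[of ht, OF ht(1)] K by simp
  qed
  ultimately show ?thesis using that h(1) min by blast
qed

definition shear :: "'i set \<Rightarrow> 'i \<Rightarrow> ('i \<Rightarrow> real) \<Rightarrow> ('i \<Rightarrow> real) \<Rightarrow> 'i \<Rightarrow> real" where
  "shear R p w h = h(p := h p - (\<Sum>i\<in>R - {p}. w i * h i))"

text \<open>The congruence \<open>B\<^sup>T M B\<close> by the shear \<open>B = shear R p w\<close>, written out entrywise.\<close>

definition shear_congruence :: "'i \<Rightarrow> ('i \<Rightarrow> real) \<Rightarrow> ('i \<Rightarrow> 'i \<Rightarrow> real) \<Rightarrow> 'i \<Rightarrow> 'i \<Rightarrow> real" where
  "shear_congruence p w M i j = M i j - (if j = p then 0 else w j * M i p)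
     - (if i = p then 0 else w i * (M p j - (if j = p then 0 else w j * M p p)))"

lemma det_on_shear_congruence:
  assumes fin: "finite R" and p: "p \<in> R"
  shows "det_on R (shear_congruence p w M) = det_on R M"
proof -
  define C where "C = (\<lambda>i j. if j \<in> R - {p} then M i j + - w j * M i p else M i j)"
  have "det_on R (\<lambda>i j. if i \<in> R - {p} then C i j + - w i * C p j else C i j) = det_on R C"
    using fin p by (intro det_on_add_row_multiples) auto
  also have "det_on R C = det_on R M"
    unfolding C_def using fin p by (intro det_on_add_col_multiples) auto
  also have "det_on R (\<lambda>i j. if i \<in> R - {p} then C i j + - w i * C p j else C i j)
      = det_on R (shear_congruence p w M)"
    by (rule det_on_cong) (auto simp: C_def shear_congruence_def)
  finally show ?thesis .
qed

lemma quad_form_shear_congruence: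
  assumes fin: "finite R" and p: "p \<in> R"
  shows "quad_form R (shear_congruence p w M) h = quad_form R M (shear R p w h)"
proof -
  define z where "z i = (if i = p then 0 else w i)" for i
  define c where "c = (\<Sum>i\<in>R. z i * h i)"
  define d where "d i = (if i = p then c else 0)" for i
  have shear: "shear R p w h = (\<lambda>i. h i - d i)"
  proof -
    have "(\<Sum>i\<in>R - {p}. w i * h i) = c"
      unfolding c_def z_def using fin p by (simp add: sum.remove if_distrib[of "\<lambda>x. x * _"] sum.If_cases)
    thus ?thesis by (auto simp: shear_def d_def fun_eq_iff)
  qed
  have if_sum: "(\<Sum>j\<in>R. if P then f j else 0) = (if P then sum f R else (0::real))" for P f
    by simp
  have "quad_form R (shear_congruence p w M) h
      = (\<Sum>i\<in>R. \<Sum>j\<in>R. h i * M i j * h j - (h i * M i p) * (z j * h j) - (z i * h i) * (M p j * h j)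
          + (z i * h i) * (z j * h j) * M p p)"
    unfolding quad_form_def shear_congruence_def z_def by (intro sum.cong refl) (simp add: algebra_simps)
  also have "\<dots> = quad_form R M h - (\<Sum>i\<in>R. h i * M i p) * c - c * (\<Sum>j\<in>R. M p j * h j) + c * c * M p p"
    unfolding quad_form_def c_def
    by (simp add: sum_subtractf sum.distrib sum_product sum_distrib_right) (simp add: sum_distrib_left sum_distrib_right)
  also have "\<dots> = (\<Sum>i\<in>R. \<Sum>j\<in>R. h i * M i j * h j - h i * M i j * d j - d i * M i j * h j
          + d i * M i j * d j)"
    using fin p by (simp add: sum_subtractf sum.distrib d_def if_distrib[of "\<lambda>x. x * _"]
        if_distrib[of "\<lambda>x. _ * x"] quad_form_def algebra_simps sum_distrib_left if_sum cong: if_cong)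
  also have "\<dots> = quad_form R M (shear R p w h)"
    unfolding quad_form_def shear by (intro sum.cong refl) (simp add: algebra_simps)
  finally show ?thesis .
qed

lemma sum_mult_shear:
  assumes "finite R" "p \<in> R" "w p = 1"
  shows "(\<Sum>i\<in>R. w i * shear R p w h i) = h p"
  using assms by (simp add: sum.remove shear_def)

lemma shear_fun_upd_sum:
  assumes "finite R" "p \<in> R" "w p = 1"
  shows "shear R p w (g(p := \<Sum>i\<in>R. w i * g i)) = g"
  using assms by (simp add: sum.remove shear_def fun_eq_iff)

lemma shear_congruence_rank_one_update:
  assumes "w p = 1"
  shows "shear_congruence p w (\<lambda>i j. M i j + t * w i * w j)
    = (\<lambda>i j. shear_congruence p w M i j + (if i = p \<and> j = p then t else 0))"
  unfolding shear_congruence_def using assms by (auto simp: algebra_simps fun_eq_iff)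

lemma symmetric_on_shear_congruence:
  assumes sym: "symmetric_on R M" and p: "p \<in> R"
  shows "symmetric_on R (shear_congruence p w M)"
  unfolding symmetric_on_def
proof (intro ballI)
  fix i j assume "i \<in> R" "j \<in> R"
  thus "shear_congruence p w M i j = shear_congruence p w M j i"
    using sym p unfolding symmetric_on_def shear_congruence_def by (simp add: algebra_simps)
qed

lemma pos_def_on_shear_congruence:
  assumes fin: "finite R" and p: "p \<in> R" and pd: "pos_def_on R M"
  shows "pos_def_on R (shear_congruence p w M)"
  unfolding pos_def_on_def
proof (intro allI impI)
  fix h :: "_ \<Rightarrow> real" assume h: "\<exists>i\<in>R. h i \<noteq> 0"
  have "\<exists>i\<in>R. shear R p w h i \<noteq> 0"
  proof (rule ccontr)
    assume "\<not> (\<exists>i\<in>R. shear R p w h i \<noteq> 0)"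
    hence zero: "shear R p w h i = 0" if "i \<in> R" for i using that by blast
    have rest: "h i = 0" if "i \<in> R - {p}" for i
      using zero[of i] that by (simp add: shear_def)
    hence "h p = 0" using zero[OF p] by (simp add: shear_def)
    with rest h show False by blast
  qed
  hence "quad_form R M (shear R p w h) > 0" using pd unfolding pos_def_on_def by blast
  thus "quad_form R (shear_congruence p w M) h > 0" by (simp add: quad_form_shear_congruence[OF fin p])
qed

lemma det_on_rank_one_update:
  fixes M :: "'i \<Rightarrow> 'i \<Rightarrow> real" and w :: "'i \<Rightarrow> real"
  defines "M' t \<equiv> \<lambda>i j. M i j + t * w i * w j"
  assumes fin: "finite R" and p: "p \<in> R" and wp: "w p = 1" and sym: "symmetric_on R M"
    and pd: "\<And>t. t > 0 \<Longrightarrow> pos_def_on R (M' t)"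
  obtains K h where "K > 0" "(\<Sum>i\<in>R. w i * h i) = 1"
    "\<And>g. (\<Sum>i\<in>R. w i * g i) = 1 \<Longrightarrow> quad_form R M h \<le> quad_form R M g"
    "\<And>t. t > 0 \<Longrightarrow> det_on R (M' t) = K * (quad_form R M h + t)"
proof -
  let ?N = "shear_congruence p w M"
  have N': "shear_congruence p w (M' t) = (\<lambda>i j. ?N i j + (if i = p \<and> j = p then t else 0))" for t
    unfolding M'_def by (rule shear_congruence_rank_one_update[where p=p and w=w, OF wp])
  have pdN: "pos_def_on R (\<lambda>i j. ?N i j + (if i = p \<and> j = p then t else 0))" if "t > 0" for t
    using pos_def_on_shear_congruence[OF fin p pd[OF that], of w] unfolding N' .
  obtain K h0 where K: "K > 0" and h0: "h0 p = 1"
    and min: "\<And>g. g p = 1 \<Longrightarrow> quad_form R ?N h0 \<le> quad_form R ?N g"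
    and det: "\<And>t. t > 0 \<Longrightarrow> det_on R (shear_congruence p w (M' t)) = K * (quad_form R ?N h0 + t)"
    using det_on_diag_update[OF fin p symmetric_on_shear_congruence[OF sym p] pdN] unfolding N' by blast
  define h where "h = shear R p w h0"
  have qf_h: "quad_form R M h = quad_form R ?N h0"
    unfolding h_def by (rule quad_form_shear_congruence[OF fin p, symmetric])
  show ?thesis
  proof (rule that[of K h])
    show "(\<Sum>i\<in>R. w i * h i) = 1" unfolding h_def sum_mult_shear[where w=w and p=p, OF fin p wp] h0 ..
    fix g assume g: "(\<Sum>i\<in>R. w i * g i) = 1"
    have "quad_form R M g = quad_form R ?N (g(p := 1))"
      using quad_form_shear_congruence[OF fin p] shear_fun_upd_sum[where w=w and p=p, OF fin p wp, of g] g by metis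
    thus "quad_form R M h \<le> quad_form R M g" using min[of "g(p := 1)"] qf_h by simp
  next
    fix t :: real assume "t > 0"
    thus "det_on R (M' t) = K * (quad_form R M h + t)"
      using det det_on_shear_congruence[OF fin p, of w "M' t"] qf_h by simp
  qed (rule K)
qed

section \<open>Laplacians, energy and effective conductance\<close>

definition lap_matrix :: "'e set \<Rightarrow> ('e \<Rightarrow> 'v \<times> 'v) \<Rightarrow> ('e \<Rightarrow> real) \<Rightarrow> 'v \<Rightarrow> 'v \<Rightarrow> real" where
  "lap_matrix E ends c y x = lap E ends c (\<lambda>z. of_bool (z = x)) y"

definition energy :: "'e set \<Rightarrow> ('e \<Rightarrow> 'v \<times> 'v) \<Rightarrow> ('e \<Rightarrow> real) \<Rightarrow> ('v \<Rightarrow> real) \<Rightarrow> real" where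
  "energy E ends c g = (\<Sum>e\<in>E. c e * (g (fst (ends e)) - g (snd (ends e)))\<^sup>2)"

lemma lap_eq_mat_vec:
  assumes G: "finite_mgraph W E ends"
  shows "lap E ends c h y = mat_vec W (lap_matrix E ends c) h y"
proof -
  have fW: "finite W" using G by (simp add: finite_mgraph_def)
  have delta: "(\<Sum>x\<in>W. h x * of_bool (z = x)) = h z" if "z \<in> W" for z
    using that fW by (simp add: of_bool_def if_distrib[of "\<lambda>a. _ * a"] cong: if_cong)
  have "mat_vec W (lap_matrix E ends c) h y = (\<Sum>e\<in>E. \<Sum>x\<in>W.
      ((if fst (ends e) = y then c e * (of_bool (y = x) - of_bool (snd (ends e) = x)) else 0)
     + (if snd (ends e) = y then c e * (of_bool (y = x) - of_bool (fst (ends e) = x)) else 0)) * h x)"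
    unfolding mat_vec_def lap_matrix_def lap_def sum_distrib_right by (rule sum.swap)
  also have "\<dots> = lap E ends c h y"
    unfolding lap_def
  proof (rule sum.cong[OF refl])
    fix e assume "e \<in> E"
    hence "fst (ends e) \<in> W" "snd (ends e) \<in> W" using G by (auto simp: finite_mgraph_def)
    thus "(\<Sum>x\<in>W. ((if fst (ends e) = y then c e * (of_bool (y = x) - of_bool (snd (ends e) = x)) else 0)
     + (if snd (ends e) = y then c e * (of_bool (y = x) - of_bool (fst (ends e) = x)) else 0)) * h x)
      = (if fst (ends e) = y then c e * (h y - h (snd (ends e))) else 0)
      + (if snd (ends e) = y then c e * (h y - h (fst (ends e))) else 0)"
      by (auto simp: algebra_simps sum.distrib sum_subtractf sum_distrib_left[symmetric] delta)
  qed
  finally show ?thesis by simp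
qed

lemma quad_form_lap_matrix:
  assumes G: "finite_mgraph W E ends"
  shows "quad_form W (lap_matrix E ends c) g = energy E ends c g"
proof -
  have fW: "finite W" using G by (simp add: finite_mgraph_def)
  have "quad_form W (lap_matrix E ends c) g = (\<Sum>y\<in>W. g y * lap E ends c g y)"
    unfolding quad_form_mat_vec lap_eq_mat_vec[OF G] ..
  also have "\<dots> = (\<Sum>e\<in>E. \<Sum>y\<in>W. g y *
      ((if fst (ends e) = y then c e * (g y - g (snd (ends e))) else 0)
    + (if snd (ends e) = y then c e * (g y - g (fst (ends e))) else 0)))"
    unfolding lap_def sum_distrib_left by (rule sum.swap)
  also have "\<dots> = energy E ends c g"
    unfolding energy_def
  proof (rule sum.cong[OF refl])
    fix e assume "e \<in> E"
    hence "fst (ends e) \<in> W" "snd (ends e) \<in> W" using G by (auto simp: finite_mgraph_def)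
    moreover have "x * (if P then a else 0) = (if P then x * a else 0)" for x a :: real and P
      by simp
    ultimately show "(\<Sum>y\<in>W. g y *
      ((if fst (ends e) = y then c e * (g y - g (snd (ends e))) else 0)
    + (if snd (ends e) = y then c e * (g y - g (fst (ends e))) else 0)))
      = c e * (g (fst (ends e)) - g (snd (ends e)))\<^sup>2"
      using fW by (simp add: distrib_left sum.distrib power2_eq_square algebra_simps)
  qed
  finally show ?thesis .
qed

lemma lap_matrix_sym: "lap_matrix E ends c y x = lap_matrix E ends c x y"
  unfolding lap_matrix_def lap_def by (rule sum.cong) auto

lemma lap_const: "lap E ends c (\<lambda>_. a) y = 0"
  unfolding lap_def by (rule sum.neutral) simp

lemma lap_diff: "lap E ends c (\<lambda>z. g z - h z) y = lap E ends c g y - lap E ends c h y"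
  unfolding lap_def sum_subtractf[symmetric] by (rule sum.cong) (auto simp: algebra_simps)

lemma det_lap_regularized:
  assumes G: "finite_mgraph W E ends" and ne: "W \<noteq> {}"
  shows "det_on W (\<lambda>y x. lap_matrix E ends c y x + 1) = real (card W) * det_lap W E ends c"
proof -
  define L where "L = lap_matrix E ends c"
  define n where "n = real (card W)"
  define x0 where "x0 = (SOME x. x \<in> W)"
  have fin: "finite W" using G by (simp add: finite_mgraph_def)
  have x0: "x0 \<in> W" unfolding x0_def using ne by (simp add: some_in_eq)
  have col_sum: "(\<Sum>y\<in>W. 1 * (L y x + 1)) = n" for x
  proof -
    have "(\<Sum>y\<in>W. L y x) = lap E ends c (\<lambda>_. 1) x"
      unfolding L_def lap_eq_mat_vec[OF G] mat_vec_def by (simp add: lap_matrix_sym)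
    thus ?thesis by (simp add: lap_const sum.distrib n_def)
  qed
  define A where "A = (\<lambda>i j. if i = x0 then n else L i j + 1)"
  define B where "B = (\<lambda>i j. if j \<in> W - {x0} then A i j + - 1 * A i x0 else A i j)"
  have "det_on W (\<lambda>y x. L y x + 1) = det_on W A"
    using det_on_row_combination[OF fin x0, of "\<lambda>_. 1" "\<lambda>y x. L y x + 1", unfolded col_sum]
    unfolding A_def by simp
  also have "\<dots> = det_on W B"
    unfolding B_def using fin x0 by (intro det_on_add_col_multiples[symmetric]) auto
  also have "\<dots> = B x0 x0 * det_on (W - {x0}) B"
    by (rule det_on_expand_row[OF fin x0]) (simp add: B_def A_def)
  also have "det_on (W - {x0}) B = det_lap W E ends c"
    unfolding det_lap_def Let_def x0_def[symmetric]
  proof (rule det_on_cong)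
    fix y x assume "y \<in> W - {x0}" "x \<in> W - {x0}"
    thus "B y x = lap E ends c (\<lambda>z. (if z = x then 1 else 0) - (if z = x0 then 1 else 0)) y"
      using lap_diff[of E ends c "\<lambda>z. of_bool (z = x)" "\<lambda>z. of_bool (z = x0)" y]
      by (simp add: B_def A_def L_def lap_matrix_def of_bool_def)
  qed
  finally show ?thesis by (simp add: B_def A_def n_def L_def)
qed

lemma quad_form_regularized:
  assumes G: "finite_mgraph W E ends"
  shows "quad_form W (\<lambda>y x. lap_matrix E ends c y x + 1) g = energy E ends c g + (\<Sum>x\<in>W. g x)\<^sup>2"
proof -
  have "quad_form W (\<lambda>y x. lap_matrix E ends c y x + 1) g
      = quad_form W (lap_matrix E ends c) g + (\<Sum>y\<in>W. \<Sum>x\<in>W. g y * g x)"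
    unfolding quad_form_def by (simp add: algebra_simps sum.distrib)
  thus ?thesis by (simp add: quad_form_lap_matrix[OF G] sum_product power2_eq_square)
qed

lemma energy_nonneg: "(\<And>e. e \<in> E \<Longrightarrow> c e \<ge> 0) \<Longrightarrow> energy E ends c g \<ge> 0"
  unfolding energy_def by (intro sum_nonneg) simp

lemma energy_eq_0_imp_const:
  assumes G: "connected_mgraph W E ends" and pos: "\<And>e. e \<in> E \<Longrightarrow> c e > 0"
    and zero: "energy E ends c g = 0" and "x \<in> W" "y \<in> W"
  shows "g x = g y"
proof -
  have "finite E" using G by (simp add: connected_mgraph_def finite_mgraph_def)
  hence "\<forall>e\<in>E. c e * (g (fst (ends e)) - g (snd (ends e)))\<^sup>2 = 0"
    using zero pos by (subst sum_nonneg_eq_0_iff[symmetric]) (auto simp: energy_def less_imp_le)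
  hence edge: "g (fst (ends e)) = g (snd (ends e))" if "e \<in> E" for e
    using pos[OF that] that by auto
  have "(x, y) \<in> (edge_rel E ends)\<^sup>*" using G \<open>x \<in> W\<close> \<open>y \<in> W\<close> by (simp add: connected_mgraph_def)
  thus ?thesis
  proof (induction rule: rtrancl_induct)
    case (step y z)
    thus ?case using edge unfolding edge_rel_def by (auto simp: prod_eq_iff)
  qed simp
qed

lemma pos_def_regularized:
  assumes G: "connected_mgraph W E ends" and pos: "\<And>e. e \<in> E \<Longrightarrow> c e > 0"
  shows "pos_def_on W (\<lambda>y x. lap_matrix E ends c y x + 1)"
  unfolding pos_def_on_def
proof (intro allI impI)
  fix g :: "_ \<Rightarrow> real" assume "\<exists>x\<in>W. g x \<noteq> 0"
  then obtain x where x: "x \<in> W" "g x \<noteq> 0" by blast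
  have G': "finite_mgraph W E ends" using G by (simp add: connected_mgraph_def)
  have E: "energy E ends c g \<ge> 0" by (rule energy_nonneg) (use pos in \<open>auto intro: less_imp_le\<close>)
  have "energy E ends c g + (\<Sum>x\<in>W. g x)\<^sup>2 > 0"
  proof (cases "energy E ends c g = 0")
    case True
    have "(\<Sum>y\<in>W. g y) = real (card W) * g x"
      using energy_eq_0_imp_const[OF G pos True _ x(1)] by simp
    moreover have "card W > 0" using G' x(1) by (auto simp: finite_mgraph_def card_gt_0_iff)
    ultimately show ?thesis using True x(2) by simp
  qed (use E in \<open>simp add: add_pos_nonneg\<close>)
  thus "quad_form W (\<lambda>y x. lap_matrix E ends c y x + 1) g > 0"
    by (simp add: quad_form_regularized[OF G'])
qed

lemma det_lap_pos:
  assumes G: "connected_mgraph W E ends" and pos: "\<And>e. e \<in> E \<Longrightarrow> c e > 0"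
  shows "det_lap W E ends c > 0"
proof -
  have G': "finite_mgraph W E ends" and ne: "W \<noteq> {}" using G by (auto simp: connected_mgraph_def)
  hence "card W > 0" by (simp add: finite_mgraph_def card_gt_0_iff)
  moreover have "det_on W (\<lambda>y x. lap_matrix E ends c y x + 1) > 0"
    using G' pos_def_regularized[OF G pos]
    by (intro det_on_pos_if_pos_def) (auto simp: finite_mgraph_def symmetric_on_def lap_matrix_sym)
  ultimately show ?thesis by (simp add: det_lap_regularized[OF G' ne] zero_less_mult_iff)
qed

lemma lap_update:
  assumes fin: "finite E" and f: "f \<in> E" and uv: "ends f = (u, v)"
  shows "lap E ends (c(f := t)) h y = lap (E - {f}) ends c h y
     + of_bool (u = y) * t * (h y - h v) + of_bool (v = y) * t * (h y - h u)"
proof -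
  have "lap (E - {f}) ends (c(f := t)) h y = lap (E - {f}) ends c h y"
    unfolding lap_def by (rule sum.cong) auto
  thus ?thesis unfolding lap_def by (subst sum.remove[OF fin f]) (simp add: uv)
qed

lemma lap_matrix_update:
  assumes "finite E" "f \<in> E" "ends f = (u, v)"
  shows "lap_matrix E ends (c(f := t)) y x = lap_matrix (E - {f}) ends c y x
     + t * (of_bool (y = u) - of_bool (y = v)) * (of_bool (x = u) - of_bool (x = v))"
  unfolding lap_matrix_def lap_update[where E=E and ends=ends, OF assms] by auto

definition effective_conductance :: "'e set \<Rightarrow> ('e \<Rightarrow> 'v \<times> 'v) \<Rightarrow> ('e \<Rightarrow> real) \<Rightarrow> 'v \<Rightarrow> 'v \<Rightarrow> real" where
  "effective_conductance E ends c u v = (INF g \<in> {g. g u - g v = 1}. energy E ends c g)"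

lemma effective_conductance_eq_regularized_min:
  assumes G: "finite_mgraph W E ends" and h: "h u - h v = 1"
    and min: "\<And>g. g u - g v = 1 \<Longrightarrow>
      quad_form W (\<lambda>y x. lap_matrix E ends c y x + 1) h \<le> quad_form W (\<lambda>y x. lap_matrix E ends c y x + 1) g"
  shows "effective_conductance E ends c u v = quad_form W (\<lambda>y x. lap_matrix E ends c y x + 1) h"
proof -
  let ?Q = "quad_form W (\<lambda>y x. lap_matrix E ends c y x + 1)"
  have fW: "finite W" using G by (simp add: finite_mgraph_def)
  have le: "?Q h \<le> energy E ends c g" if g: "g u - g v = 1" for g
  proof -
    \<comment> \<open>centring \<open>g\<close> removes the \<open>J\<close>-part without changing the energy\<close>
    define g' where "g' z = g z - (\<Sum>x\<in>W. g x) / real (card W)" for z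
    have "(\<Sum>x\<in>W. g' x) = 0"
      using fW by (cases "W = {}") (simp_all add: g'_def sum_subtractf)
    moreover have "energy E ends c g' = energy E ends c g"
      unfolding energy_def g'_def by simp
    ultimately have "?Q g' = energy E ends c g" by (simp add: quad_form_regularized[OF G])
    moreover have "?Q h \<le> ?Q g'" using g by (intro min) (simp add: g'_def)
    ultimately show ?thesis by simp
  qed
  have "energy E ends c h \<le> ?Q h" by (simp add: quad_form_regularized[OF G])
  hence "?Q h = energy E ends c h" using le[OF h] by simp
  thus ?thesis
    unfolding effective_conductance_def using h le by (intro cInf_eq_minimum) auto
qed

lemma det_lap_edge_update:
  assumes G: "connected_mgraph W E ends" and f: "f \<in> E" "ends f = (u, v)" "u \<noteq> v"
    and pos: "\<And>e. e \<in> E - {f} \<Longrightarrow> c e > 0"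
  obtains K where "K > 0"
    "\<And>t. t > 0 \<Longrightarrow> det_lap W E ends (c(f := t)) = K * (effective_conductance (E - {f}) ends c u v + t)"
proof -
  have G': "finite_mgraph W E ends" and ne: "W \<noteq> {}" using G by (auto simp: connected_mgraph_def)
  have fin: "finite W" "finite E" and uv: "u \<in> W" "v \<in> W"
    using G' f by (auto simp: finite_mgraph_def dest!: bspec[of _ _ f])
  have G0: "finite_mgraph W (E - {f}) ends" using G' by (auto simp: finite_mgraph_def)
  define M where "M = (\<lambda>y x. lap_matrix (E - {f}) ends c y x + 1)"
  define w where "w z = (of_bool (z = u) - of_bool (z = v) :: real)" for z
  have upd: "(\<lambda>y x. M y x + t * w y * w x) = (\<lambda>y x. lap_matrix E ends (c(f := t)) y x + 1)" for t
    unfolding M_def w_def lap_matrix_update[where E=E and ends=ends, OF fin(2) f(1,2)]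
    by (simp add: fun_eq_iff algebra_simps)
  have lin: "(\<Sum>z\<in>W. w z * g z) = g u - g v" for g
    using fin(1) uv by (simp add: w_def left_diff_distrib sum_subtractf of_bool_def
        if_distrib[of "\<lambda>a. a * _"] cong: if_cong)
  have pd: "pos_def_on W (\<lambda>y x. M y x + t * w y * w x)" if "t > 0" for t
    unfolding upd using pos that by (intro pos_def_regularized[OF G]) auto
  have sym: "symmetric_on W M" by (simp add: symmetric_on_def M_def lap_matrix_sym)
  have wu: "w u = 1" using f(3) by (simp add: w_def)
  obtain K h where K: "K > 0" and h: "h u - h v = 1"
    and min: "\<And>g. g u - g v = 1 \<Longrightarrow> quad_form W M h \<le> quad_form W M g"
    and det: "\<And>t. t > 0 \<Longrightarrow> det_on W (\<lambda>y x. M y x + t * w y * w x) = K * (quad_form W M h + t)"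
    using det_on_rank_one_update[OF fin(1) uv(1) wu sym pd, unfolded lin] by blast
  have eff: "effective_conductance (E - {f}) ends c u v = quad_form W M h"
    unfolding M_def by (rule effective_conductance_eq_regularized_min[OF G0 h min[unfolded M_def]])
  have n: "real (card W) > 0" using fin(1) ne by (simp add: card_gt_0_iff)
  show ?thesis
  proof (rule that[of "K / real (card W)"])
    show "K / real (card W) > 0" using K n by simp
    fix t :: real assume "t > 0"
    hence "real (card W) * det_lap W E ends (c(f := t)) = K * (effective_conductance (E - {f}) ends c u v + t)"
      using det_lap_regularized[OF G' ne, of "c(f := t)"] det[unfolded upd] eff by simp
    thus "det_lap W E ends (c(f := t)) = K / real (card W) * (effective_conductance (E - {f}) ends c u v + t)"
      using n by (simp add: field_simps)
  qed
qed

lemma unit_potentials_nonempty: "u \<noteq> v \<Longrightarrow> {g :: 'v \<Rightarrow> real. g u - g v = 1} \<noteq> {}"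
proof -
  assume "u \<noteq> v"
  hence "(\<lambda>z. of_bool (z = u)) \<in> {g :: 'v \<Rightarrow> real. g u - g v = 1}" by simp
  thus ?thesis by (metis empty_iff)
qed

lemma effective_conductance_nonneg:
  assumes "u \<noteq> v" and "\<And>e. e \<in> E \<Longrightarrow> c e \<ge> 0"
  shows "effective_conductance E ends c u v \<ge> 0"
  unfolding effective_conductance_def
proof (rule cINF_greatest)
  show "{g :: _ \<Rightarrow> real. g u - g v = 1} \<noteq> {}" using assms(1) by (rule unit_potentials_nonempty)
qed (rule energy_nonneg[OF assms(2)])

lemma effective_conductance_mono:
  assumes "E \<subseteq> E'" "finite E'" "u \<noteq> v" and nonneg: "\<And>e. e \<in> E' \<Longrightarrow> c e \<ge> 0"
  shows "effective_conductance E ends c u v \<le> effective_conductance E' ends c u v"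
  unfolding effective_conductance_def
proof (rule cINF_superset_mono)
  show "{g :: _ \<Rightarrow> real. g u - g v = 1} \<noteq> {}" using assms(3) by (rule unit_potentials_nonempty)
  show "bdd_below (energy E ends c ` {g. g u - g v = 1})"
    using assms(1) nonneg by (intro bdd_belowI2[of _ 0] energy_nonneg) auto
  show "energy E ends c g \<le> energy E' ends c g" for g
    unfolding energy_def using assms(1,2) nonneg by (intro sum_mono2) auto
qed simp

section \<open>Deletion and contraction\<close>

lemma cls_endpoints_eq:
  assumes e: "e \<in> F"
  shows "cls V F ends (fst (ends e)) = cls V F ends (snd (ends e))"
proof -
  let ?r = "edge_rel F ends"
  obtain a b where ab0: "ends e = (a, b)" by (cases "ends e") auto
  have ab: "(a, b) \<in> ?r" and ba: "(b, a) \<in> ?r"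
    using e ab0 unfolding edge_rel_def by (auto intro!: exI[of _ e] simp: prod.swap_def)
  have "{y \<in> V. (a, y) \<in> ?r\<^sup>*} = {y \<in> V. (b, y) \<in> ?r\<^sup>*}"
    using r_into_rtrancl[OF ab] r_into_rtrancl[OF ba] by (auto intro: rtrancl_trans)
  thus ?thesis unfolding cls_def ab0 by simp
qed

lemma rtrancl_edge_rel_contraction:
  assumes "(x, y) \<in> (edge_rel E ends)\<^sup>*"
  shows "(cls V F ends x, cls V F ends y) \<in> (edge_rel (E - F) (contr_ends V F ends))\<^sup>*"
  using assms
proof (induction rule: rtrancl_induct)
  case base thus ?case by simp
next
  case (step y z)
  from step(2) obtain e where e: "e \<in> E" "(y, z) = ends e \<or> (y, z) = prod.swap (ends e)"
    unfolding edge_rel_def by blast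
  have "cls V F ends y = cls V F ends z \<or> (cls V F ends y, cls V F ends z) \<in> edge_rel (E - F) (contr_ends V F ends)"
  proof (cases "e \<in> F")
    case True thus ?thesis using cls_endpoints_eq[OF True, of V] e(2) by (auto simp: prod_eq_iff)
  next
    case False
    hence "e \<in> E - F" using e(1) by simp
    thus ?thesis using e(2) unfolding edge_rel_def contr_ends_def
      by (auto simp: prod_eq_iff)
  qed
  thus ?case using step(3) by (auto intro: rtrancl_into_rtrancl)
qed

lemma connected_mgraph_contraction:
  assumes G: "connected_mgraph V E ends"
  shows "connected_mgraph (cls V F ends ` V) (E - F) (contr_ends V F ends)"
  using G rtrancl_edge_rel_contraction[of _ _ E ends V F]
  unfolding connected_mgraph_def finite_mgraph_def contr_ends_def
  by auto

lemma energy_contraction: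
  assumes "finite E" "F \<subseteq> E"
  shows "energy (E - F) (contr_ends V F ends) c g = energy E ends c (\<lambda>z. g (cls V F ends z))"
proof -
  have "energy F ends c (\<lambda>z. g (cls V F ends z)) = 0"
    unfolding energy_def by (intro sum.neutral) (simp add: cls_endpoints_eq)
  moreover have "energy E ends c (\<lambda>z. g (cls V F ends z))
      = energy (E - F) ends c (\<lambda>z. g (cls V F ends z)) + energy F ends c (\<lambda>z. g (cls V F ends z))"
    unfolding energy_def using assms by (simp add: sum.subset_diff)
  ultimately show ?thesis by (simp add: energy_def contr_ends_def)
qed

lemma effective_conductance_contraction:
  assumes "finite E" "F \<subseteq> E" and ne: "cls V F ends u \<noteq> cls V F ends v"
    and nonneg: "\<And>e. e \<in> E \<Longrightarrow> c e \<ge> 0"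
  shows "effective_conductance E ends c u v
    \<le> effective_conductance (E - F) (contr_ends V F ends) c (cls V F ends u) (cls V F ends v)"
  unfolding effective_conductance_def
proof (rule cINF_mono)
  show "{g :: _ \<Rightarrow> real. g (cls V F ends u) - g (cls V F ends v) = 1} \<noteq> {}"
    using ne by (rule unit_potentials_nonempty)
  show "bdd_below (energy E ends c ` {g. g u - g v = 1})"
    using nonneg by (intro bdd_belowI2[of _ 0] energy_nonneg) auto
  fix g :: "_ \<Rightarrow> real" assume "g \<in> {g. g (cls V F ends u) - g (cls V F ends v) = 1}"
  thus "\<exists>g'\<in>{g. g u - g v = 1}. energy E ends c g' \<le> energy (E - F) (contr_ends V F ends) c g"
    using energy_contraction[OF assms(1,2), of V ends c g] by (intro bexI[of _ "\<lambda>z. g (cls V F ends z)"]) auto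
qed

lemma det_lap_loop_update:
  assumes "ends f = (u, u)"
  shows "det_lap W E ends (c(f := t)) = det_lap W E ends c"
proof -
  have "lap E ends (c(f := t)) = lap E ends c"
    unfolding lap_def using assms by (intro ext sum.cong) auto
  thus ?thesis unfolding det_lap_def by simp
qed

lemma det_lap_ratio_loop:
  assumes G: "connected_mgraph W E ends" and "ends f = (u, u)" and pos: "\<And>e. e \<in> E \<Longrightarrow> c e > 0"
  shows "det_lap W E ends (c(f := q)) / det_lap W E ends (c(f := 1)) = 1"
proof -
  have "det_lap W E ends c > 0" using G pos by (rule det_lap_pos)
  thus ?thesis by (simp add: det_lap_loop_update[where ends=ends, OF assms(2)])
qed

lemma det_lap_ratio:
  assumes G: "connected_mgraph W E ends" and f: "f \<in> E" "ends f = (u, v)" "u \<noteq> v"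
    and pos: "\<And>e. e \<in> E \<Longrightarrow> c e > 0" and q: "q > 0"
  shows "det_lap W E ends (c(f := q)) / det_lap W E ends (c(f := 1))
    = (effective_conductance (E - {f}) ends c u v + q) / (effective_conductance (E - {f}) ends c u v + 1)"
proof -
  obtain K where K: "K > 0"
    and det: "\<And>t. t > 0 \<Longrightarrow> det_lap W E ends (c(f := t)) = K * (effective_conductance (E - {f}) ends c u v + t)"
    using det_lap_edge_update[OF G f] pos by blast
  have "effective_conductance (E - {f}) ends c u v \<ge> 0"
    using f(3) pos by (intro effective_conductance_nonneg) (auto intro: less_imp_le)
  thus ?thesis using det[OF q] det[of 1] K by simp
qed

lemma shifted_ratio_antimono:
  fixes a b q :: real
  assumes "0 \<le> a" "a \<le> b" "q \<ge> 1"
  shows "(b + q) / (b + 1) \<le> (a + q) / (a + 1)"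
proof -
  have "(a + q) * (b + 1) - (b + q) * (a + 1) = (q - 1) * (b - a)" by (simp add: algebra_simps)
  moreover have "(q - 1) * (b - a) \<ge> 0" using assms by simp
  ultimately have "(b + q) * (a + 1) \<le> (a + q) * (b + 1)" by linarith
  thus ?thesis using assms by (simp add: divide_simps)
qed

lemma shifted_ratio_ge_1: "0 \<le> (m::real) \<Longrightarrow> 1 \<le> q \<Longrightarrow> 1 \<le> (m + q) / (m + 1)"
  by (simp add: divide_simps)

lemma det_lap_ratio_ge_1:
  assumes G: "connected_mgraph W E ends" and f: "f \<in> E"
    and pos: "\<And>e. e \<in> E \<Longrightarrow> c e > 0" and q: "q \<ge> 1"
  shows "1 \<le> det_lap W E ends (c(f := q)) / det_lap W E ends (c(f := 1))"
proof -
  obtain u v where uv: "ends f = (u, v)" by (cases "ends f")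
  show ?thesis
  proof (cases "u = v")
    case True
    hence "ends f = (u, u)" using uv by simp
    with G have "det_lap W E ends (c(f := q)) / det_lap W E ends (c(f := 1)) = 1"
      using pos by (rule det_lap_ratio_loop)
    thus ?thesis by simp
  next
    case False
    have "0 \<le> effective_conductance (E - {f}) ends c u v"
      using False pos by (intro effective_conductance_nonneg) (auto intro: less_imp_le)
    moreover have "q > 0" using q by simp
    ultimately show ?thesis
      using det_lap_ratio[OF G f uv False, of c q] pos shifted_ratio_ge_1 q by simp
  qed
qed

lemma det_lap_ratio_subgraph:
  assumes G: "connected_mgraph V E ends" and G': "connected_mgraph V' E' ends" and sub: "E' \<subseteq> E"
    and f: "f \<in> E'" and pos: "\<And>e. e \<in> E \<Longrightarrow> c e > 0" and q: "q \<ge> 1"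
  shows "det_lap V E ends (c(f := q)) / det_lap V E ends (c(f := 1))
    \<le> det_lap V' E' ends (c(f := q)) / det_lap V' E' ends (c(f := 1))"
proof -
  obtain u v where uv: "ends f = (u, v)" by (cases "ends f")
  have pos': "\<And>e. e \<in> E' \<Longrightarrow> c e > 0" using pos sub by blast
  show ?thesis
  proof (cases "u = v")
    case True
    hence loop: "ends f = (u, u)" using uv by simp
    have "det_lap V E ends (c(f := q)) / det_lap V E ends (c(f := 1)) = 1"
      using G loop pos by (rule det_lap_ratio_loop)
    moreover have "det_lap V' E' ends (c(f := q)) / det_lap V' E' ends (c(f := 1)) = 1"
      using G' loop pos' by (rule det_lap_ratio_loop)
    ultimately show ?thesis by simp
  next
    case False
    let ?m = "effective_conductance (E - {f}) ends c u v"
    let ?m' = "effective_conductance (E' - {f}) ends c u v"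
    have "finite E" using G by (simp add: connected_mgraph_def finite_mgraph_def)
    hence le: "?m' \<le> ?m" using sub False pos by (intro effective_conductance_mono) (auto intro: less_imp_le)
    have nonneg: "0 \<le> ?m'" using False pos' by (intro effective_conductance_nonneg) (auto intro: less_imp_le)
    have "q > 0" using q by simp
    hence "det_lap V E ends (c(f := q)) / det_lap V E ends (c(f := 1)) = (?m + q) / (?m + 1)"
      and "det_lap V' E' ends (c(f := q)) / det_lap V' E' ends (c(f := 1)) = (?m' + q) / (?m' + 1)"
      using f sub pos pos' by (auto intro!: det_lap_ratio[OF G _ uv False] det_lap_ratio[OF G' f uv False])
    thus ?thesis using shifted_ratio_antimono[OF nonneg le q] by simp
  qed
qed

lemma det_lap_ratio_contraction:
  assumes G: "connected_mgraph V E ends" and F: "F \<subseteq> E" and f: "f \<in> E - F"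
    and pos: "\<And>e. e \<in> E \<Longrightarrow> c e > 0" and q: "q \<ge> 1"
  shows "det_lap (cls V F ends ` V) (E - F) (contr_ends V F ends) (c(f := q))
      / det_lap (cls V F ends ` V) (E - F) (contr_ends V F ends) (c(f := 1))
    \<le> det_lap V E ends (c(f := q)) / det_lap V E ends (c(f := 1))"
proof -
  let ?C = "cls V F ends"
  have GC: "connected_mgraph (?C ` V) (E - F) (contr_ends V F ends)"
    by (rule connected_mgraph_contraction[OF G])
  have posC: "\<And>e. e \<in> E - F \<Longrightarrow> c e > 0" using pos by blast
  obtain u v where uv: "ends f = (u, v)" by (cases "ends f")
  have uvC: "contr_ends V F ends f = (?C u, ?C v)" by (simp add: contr_ends_def uv)
  show ?thesis
  proof (cases "?C u = ?C v")
    case True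
    have "det_lap (?C ` V) (E - F) (contr_ends V F ends) (c(f := q))
        / det_lap (?C ` V) (E - F) (contr_ends V F ends) (c(f := 1)) = 1"
      using uvC True posC by (intro det_lap_ratio_loop[OF GC]) auto
    thus ?thesis using det_lap_ratio_ge_1[OF G _ pos q] f by simp
  next
    case False
    hence uv_ne: "u \<noteq> v" by blast
    let ?m = "effective_conductance (E - {f}) ends c u v"
    let ?mC = "effective_conductance (E - F - {f}) (contr_ends V F ends) c (?C u) (?C v)"
    have "finite E" using G by (simp add: connected_mgraph_def finite_mgraph_def)
    hence "?m \<le> effective_conductance (E - {f} - F) (contr_ends V F ends) c (?C u) (?C v)"
      using F f False pos by (intro effective_conductance_contraction) (auto intro: less_imp_le)
    moreover have "E - {f} - F = E - F - {f}" by blast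
    ultimately have le: "?m \<le> ?mC" by simp
    have nonneg: "0 \<le> ?m" using uv_ne pos by (intro effective_conductance_nonneg) (auto intro: less_imp_le)
    have "q > 0" using q by simp
    hence "det_lap V E ends (c(f := q)) / det_lap V E ends (c(f := 1)) = (?m + q) / (?m + 1)"
      and "det_lap (?C ` V) (E - F) (contr_ends V F ends) (c(f := q))
        / det_lap (?C ` V) (E - F) (contr_ends V F ends) (c(f := 1)) = (?mC + q) / (?mC + 1)"
      using f pos posC by (auto intro!: det_lap_ratio[OF G _ uv uv_ne] det_lap_ratio[OF GC _ uvC False])
    thus ?thesis using shifted_ratio_antimono[OF nonneg le q] by simp
  qed
qed

theorem lemma4p8:
  fixes V V' :: "'v set" and E E' F :: "'e set" and ends :: "'e \<Rightarrow> 'v \<times> 'v"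
    and q :: real and \<kappa> :: "'e \<Rightarrow> real" and f :: 'e
  assumes G: "connected_mgraph V E ends"
    and sub: "V' \<subseteq> V" "E' \<subseteq> E"
    and G': "connected_mgraph V' E' ends"
    and FE: "F \<subseteq> E"
    and q: "q \<ge> 1"
    and kappa: "\<forall>e\<in>E. \<kappa> e = 1 \<or> \<kappa> e = q"
    and f: "f \<in> E' - F"
  shows "det_lap V' E' ends (\<kappa>(f := q)) / det_lap V' E' ends (\<kappa>(f := 1))
           \<ge> det_lap V E ends (\<kappa>(f := q)) / det_lap V E ends (\<kappa>(f := 1))
       \<and> det_lap V E ends (\<kappa>(f := q)) / det_lap V E ends (\<kappa>(f := 1))
           \<ge> det_lap (cls V F ends ` V) (E - F) (contr_ends V F ends) (\<kappa>(f := q))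
             / det_lap (cls V F ends ` V) (E - F) (contr_ends V F ends) (\<kappa>(f := 1))"
proof
  have pos: "\<And>e. e \<in> E \<Longrightarrow> \<kappa> e > 0" using kappa q by force
  show "det_lap V' E' ends (\<kappa>(f := q)) / det_lap V' E' ends (\<kappa>(f := 1))
      \<ge> det_lap V E ends (\<kappa>(f := q)) / det_lap V E ends (\<kappa>(f := 1))"
    using f by (intro det_lap_ratio_subgraph[OF G G' sub(2) _ pos q]) simp
  show "det_lap V E ends (\<kappa>(f := q)) / det_lap V E ends (\<kappa>(f := 1))
      \<ge> det_lap (cls V F ends ` V) (E - F) (contr_ends V F ends) (\<kappa>(f := q))
        / det_lap (cls V F ends ` V) (E - F) (contr_ends V F ends) (\<kappa>(f := 1))"
    using f sub by (intro det_lap_ratio_contraction[OF G FE _ pos q]) auto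
qed

end
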